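(* Let $K\subset\mathbb{R}^n$ be a convex body with smooth boundary and let $\gamma$ be a periodic billiard trajectory on $K$. Set $\mathcal{N}=\{\nu(\gamma(t)):t\in\mathcal{B}_\gamma\}$. Then $0\in\mathrm{conv}(\mathcal{N})$ and $h(K:\nu)\le h(\gamma(S^1):\nu)$ for every $\nu\in\mathcal{N}$. In particular $\mathcal{P}(K)\subset\mathcal{P}^+(K)$.
   Context: A convex body is a compact convex set with nonempty interior; $S^1=\mathbb{R}/\mathbb{Z}$; $K$ is regarded as a Riemannian manifold with boundary with the Euclidean metric. A nonconstant continuous $\gamma:S^1\to K$ is a periodic billiard trajectory if there is a finite $\mathcal{B}_\gamma\subset S^1$ with $\ddot\gamma\equiv0$ off $\mathcal{B}_\gamma$ and for each $t\in\mathcal{B}_\gamma$: $\gamma(t)\in\partial K$, $\dot\gamma^+(t)+\dot\gamma^-(t)\in T_{\gamma(t)}\partial K$, $\dot\gamma^+(t)-\dot\gamma^-(t)\in(T_{\gamma(t)}\partial K)^\perp\setminus\{0\}$, where $\dot\gamma^\pm(t)=\lim_{h\to0\pm}\dot\gamma(t+h)$. $\mathcal{P}(K)$ is the set of periodic billiard trajectories on $K$. For $q\in\partial K$, $\nu(q)$ is the outer unit normal. For compact $S$, $h(S:\nu)=\max\{s\cdot\nu:s\in S\}$. $\mathcal{P}^+(K)$ is the set of piecewise linear closed curves $\gamma:S^1\to\mathbb{R}^n$ with $\gamma(S^1)+x\not\subset\mathrm{int}\,K$ for all $x\in\mathbb{R}^n$. *)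

theory Defs
  imports "HOL-Analysis.Analysis"
begin

fun C_k :: "nat \<Rightarrow> 'a::real_normed_vector set \<Rightarrow> ('a \<Rightarrow> real) \<Rightarrow> bool" where
  "C_k 0 U f = continuous_on U f"
| "C_k (Suc k) U f =
     ((\<forall>x\<in>U. f differentiable (at x)) \<and>
      (\<forall>v. C_k k U (\<lambda>x. frechet_derivative f (at x) v)))"

definition smooth_on :: "'a::real_normed_vector set \<Rightarrow> ('a \<Rightarrow> real) \<Rightarrow> bool" where
  "smooth_on U f \<longleftrightarrow> (\<forall>k. C_k k U f)"

definition smooth_boundary :: "'a::euclidean_space set \<Rightarrow> bool" where
  "smooth_boundary K \<longleftrightarrow>
     (\<forall>q\<in>frontier K. \<exists>U f. open U \<and> q \<in> U \<and> smooth_on U f \<and>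
        frechet_derivative f (at q) \<noteq> (\<lambda>v. 0) \<and>
        K \<inter> U = {x\<in>U. f x \<le> 0})"

definition convex_body :: "'a::euclidean_space set \<Rightarrow> bool" where
  "convex_body K \<longleftrightarrow> compact K \<and> convex K \<and> interior K \<noteq> {}"

definition tangent_bd :: "'a::euclidean_space set \<Rightarrow> 'a \<Rightarrow> 'a set" where
  "tangent_bd K q = {v. \<exists>c::real \<Rightarrow> 'a. c 0 = q \<and> (c has_vector_derivative v) (at 0) \<and>
        (\<exists>e>0. \<forall>t. \<bar>t\<bar> < e \<longrightarrow> c t \<in> frontier K)}"

definition orth_compl :: "'a::euclidean_space set \<Rightarrow> 'a set" where
  "orth_compl T = {w. \<forall>v\<in>T. w \<bullet> v = 0}"

definition outer_normal :: "'a::euclidean_space set \<Rightarrow> 'a \<Rightarrow> 'a" where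
  "outer_normal K q = (THE u. norm u = 1 \<and> u \<in> orth_compl (tangent_bd K q) \<and>
        (\<exists>e>0. \<forall>t. 0 < t \<and> t < e \<longrightarrow> q + t *\<^sub>R u \<notin> K))"

definition supp :: "'a::euclidean_space set \<Rightarrow> 'a \<Rightarrow> real" where
  "supp S \<nu> = Sup ((\<lambda>s. s \<bullet> \<nu>) ` S)"

text \<open>Curves on S^1 = R/Z are represented as 1-periodic functions on the reals;
  a subset B of S^1 is represented by its representatives in [0,1).\<close>
definition lift :: "real set \<Rightarrow> real set" where
  "lift B = {t. frac t \<in> B}"

definition vel :: "(real \<Rightarrow> 'a::real_normed_vector) \<Rightarrow> real \<Rightarrow> 'a" where
  "vel \<gamma> s = vector_derivative \<gamma> (at s)"

definition billiard_traj_with :: "'a::euclidean_space set \<Rightarrow> (real \<Rightarrow> 'a) \<Rightarrow> real set \<Rightarrow> bool" where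
  "billiard_traj_with K \<gamma> B \<longleftrightarrow>
     (\<forall>t. \<gamma> (t + 1) = \<gamma> t) \<and> continuous_on UNIV \<gamma> \<and> \<gamma> ` UNIV \<subseteq> K \<and>
     (\<exists>s t. \<gamma> s \<noteq> \<gamma> t) \<and>
     finite B \<and> B \<subseteq> {0..<1} \<and>
     (\<forall>t. t \<notin> lift B \<longrightarrow> \<gamma> differentiable (at t) \<and> (vel \<gamma> has_vector_derivative 0) (at t)) \<and>
     (\<forall>t\<in>B. \<exists>vp vm. (vel \<gamma> \<longlongrightarrow> vp) (at_right t) \<and> (vel \<gamma> \<longlongrightarrow> vm) (at_left t) \<and>
        \<gamma> t \<in> frontier K \<and>
        vp + vm \<in> tangent_bd K (\<gamma> t) \<and>
        vp - vm \<in> orth_compl (tangent_bd K (\<gamma> t)) \<and> vp - vm \<noteq> 0)"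

definition billiard_trajs :: "'a::euclidean_space set \<Rightarrow> (real \<Rightarrow> 'a) set" where
  "billiard_trajs K = {\<gamma>. \<exists>B. billiard_traj_with K \<gamma> B}"

definition piecewise_linear_closed :: "(real \<Rightarrow> 'a::real_normed_vector) \<Rightarrow> bool" where
  "piecewise_linear_closed \<gamma> \<longleftrightarrow>
     (\<forall>t. \<gamma> (t + 1) = \<gamma> t) \<and> continuous_on UNIV \<gamma> \<and>
     (\<exists>P. finite P \<and> P \<subseteq> {0..<1} \<and>
        (\<forall>a b. a < b \<and> {a<..<b} \<inter> lift P = {} \<longrightarrow>
           (\<exists>u v. \<forall>s\<in>{a..b}. \<gamma> s = u + s *\<^sub>R v)))"

definition PPlus :: "'a::euclidean_space set \<Rightarrow> (real \<Rightarrow> 'a) set" where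
  "PPlus K = {\<gamma>. piecewise_linear_closed \<gamma> \<and>
      (\<forall>x. \<not> ((\<lambda>p. p + x) ` (\<gamma> ` UNIV) \<subseteq> interior K))}"

end

theory Submission
  imports Defs "HOL-Library.Periodic_Fun"
begin

text \<open>
  At a boundary point q of a convex body with smooth boundary the supporting hyperplane is
  unique, so its unit normal \<open>\<nu>\<close> spans the normal cone; the tangent space of the boundary is
  then \<open>\<nu>\<^sup>\<bottom>\<close> and \<open>\<nu>\<close> is the outer normal. Since the trajectory stays in K, the outgoing velocity
  at a bounce satisfies \<open>v\<^sub>+ \<bullet> \<nu> \<le> 0\<close>, and the reflection law makes the velocity jump
  \<open>v\<^sub>+ - v\<^sub>-\<close> a negative multiple of \<open>\<nu>\<close>.

  If 0 were not in the convex hull of the bounce normals, some a would have \<open>a \<bullet> \<nu> > 0\<close> for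
  all of them. The trajectory is affine between bounces, so \<open>a \<bullet> \<gamma>\<close> attains its minimum at a
  bounce; there \<open>a \<bullet> v\<^sub>+ \<ge> 0 \<ge> a \<bullet> v\<^sub>-\<close>, contradicting \<open>a \<bullet> (v\<^sub>+ - v\<^sub>-) < 0\<close>.
  The support inequality holds because \<open>\<gamma>(t)\<close> itself attains \<open>h(K:\<nu>)\<close>, and a translate
  \<open>\<gamma> + x\<close> inside the interior would force \<open>x \<bullet> \<nu> < 0\<close> for every bounce normal, which
  is impossible once 0 lies in their convex hull.
\<close>

lemma halfspace_lt_subset_halfspace_le_swap:
  fixes g n :: "'a::euclidean_space"
  assumes "g \<noteq> 0" and "{w. g \<bullet> w < 0} \<subseteq> {w. n \<bullet> w \<le> 0}"
  shows "{w. n \<bullet> w < 0} \<subseteq> {w. g \<bullet> w < 0}"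
proof -
  have "closure {w. g \<bullet> w < 0} \<subseteq> {w. n \<bullet> w \<le> 0}"
    using assms(2) by (intro closure_minimal) (auto intro: closed_halfspace_le)
  then have "{w. g \<bullet> w \<le> 0} \<subseteq> {w. n \<bullet> w \<le> 0}" using assms(1) by simp
  then have nonneg: "n \<bullet> w \<ge> 0" if "g \<bullet> w \<ge> 0" for w
  proof -
    have "- w \<in> {w. g \<bullet> w \<le> 0}" using that by simp
    then have "n \<bullet> (- w) \<le> 0" using \<open>{w. g \<bullet> w \<le> 0} \<subseteq> _\<close> by blast
    then show ?thesis by simp
  qed
  show ?thesis
  proof (rule subsetI, rule ccontr)
    fix w assume "w \<in> {w. n \<bullet> w < 0}" "w \<notin> {w. g \<bullet> w < 0}"
    then show False using nonneg[of w] by simp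
  qed
qed

lemma orth_compl_hyperplane:
  fixes n w :: "'a::euclidean_space"
  assumes "n \<bullet> n = 1" "w \<in> orth_compl {v. v \<bullet> n = 0}"
  shows "w = (w \<bullet> n) *\<^sub>R n"
proof -
  define v where "v = w - (w \<bullet> n) *\<^sub>R n"
  have "v \<bullet> n = 0" using assms(1) by (simp add: v_def inner_diff_left)
  then have "w \<bullet> v = 0" using assms(2) by (simp add: orth_compl_def)
  then have "v \<bullet> v = 0" using \<open>v \<bullet> n = 0\<close> by (simp add: v_def inner_diff_left inner_commute)
  then show ?thesis by (simp add: v_def)
qed

lemma has_real_derivative_zero_if_sublinear:
  fixes \<phi> :: "real \<Rightarrow> real"
  assumes "\<phi> 0 = 0" "\<And>d. d > 0 \<Longrightarrow> \<forall>\<^sub>F t in at 0. \<bar>\<phi> t\<bar> \<le> d * \<bar>t\<bar>"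
  shows "(\<phi> has_real_derivative 0) (at 0)"
  unfolding has_field_derivative_iff
proof (rule tendstoI)
  fix r :: real assume "r > 0"
  have "\<forall>\<^sub>F t in at 0. \<bar>\<phi> t\<bar> \<le> r/2 * \<bar>t\<bar> \<and> t \<noteq> 0"
    using assms(2)[of "r/2"] \<open>r > 0\<close> by (simp add: eventually_conj eventually_at_filter)
  then show "\<forall>\<^sub>F t in at 0. dist ((\<phi> t - \<phi> 0) / (t - 0)) 0 < r"
  proof eventually_elim
    case (elim t)
    then have "\<bar>\<phi> t\<bar> / \<bar>t\<bar> \<le> r/2" by (simp add: divide_le_eq)
    then have "\<bar>\<phi> t\<bar> / \<bar>t\<bar> < r" using \<open>r > 0\<close> by linarith
    then show ?case using assms(1) by (simp add: dist_real_def abs_divide)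
  qed
qed

lemma frontier_if_ray_leaves:
  fixes K :: "'a::real_normed_vector set"
  assumes "p \<in> K" "closed K" "n \<noteq> 0" "\<And>s. s > 0 \<Longrightarrow> p + s *\<^sub>R n \<notin> K"
  shows "p \<in> frontier K"
proof -
  have "p \<notin> interior K"
  proof
    assume "p \<in> interior K"
    then obtain r where "r > 0" "ball p r \<subseteq> K" by (auto simp: mem_interior)
    moreover have "p + (r / (2 * norm n)) *\<^sub>R n \<in> ball p r"
      using \<open>r > 0\<close> \<open>n \<noteq> 0\<close> by (simp add: dist_norm)
    ultimately show False using assms(4)[of "r / (2 * norm n)"] \<open>n \<noteq> 0\<close> by auto
  qed
  then show ?thesis using assms(1,2) by (simp add: frontier_def closure_closed)
qed

lemma periodic_frac:
  assumes "\<forall>t. f (t + 1) = f t"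
  shows "f (frac t) = f t"
proof -
  interpret periodic_fun_simple' f using assms by unfold_locales simp
  have "frac t + of_int \<lfloor>t\<rfloor> = t" by (simp add: frac_def)
  then show ?thesis using plus_of_int[of "frac t" "\<lfloor>t\<rfloor>"] by metis
qed

lemma continuous_periodic_attains_min:
  fixes h :: "real \<Rightarrow> real"
  assumes "continuous_on UNIV h" "\<forall>t. h (t + 1) = h t"
  obtains s where "\<And>t. h s \<le> h t"
proof -
  obtain s where s: "\<forall>t\<in>{0..1}. h s \<le> h t"
    using continuous_attains_inf[OF compact_Icc _ continuous_on_subset[OF assms(1) subset_UNIV], of 0 1]
    by auto
  have "h s \<le> h t" for t
  proof -
    have "frac t \<in> {0..1}" using frac_lt_1[of t] by simp
    then have "h s \<le> h (frac t)" using s by blast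
    also have "\<dots> = h t" by (rule periodic_frac[OF assms(2)])
    finally show ?thesis .
  qed
  then show thesis ..
qed

lemma sublevel_boundary_point_value:
  fixes f :: "'a::t2_space \<Rightarrow> real"
  assumes "open U" "q \<in> U" "isCont f q" "q \<in> K" "q \<notin> interior K"
    and K_U: "K \<inter> U = {x\<in>U. f x \<le> 0}"
  shows "f q = 0"
proof (rule ccontr)
  assume "f q \<noteq> 0"
  moreover have "f q \<le> 0" using assms(2,4) K_U by blast
  ultimately have "f q < 0" by simp
  then have "\<forall>\<^sub>F x in nhds q. f x < 0 \<and> x \<in> U"
    using assms(1-3) by (intro eventually_conj order_tendstoD(2) eventually_nhds_in_open)
      (auto simp: isCont_def tendsto_at_iff_tendsto_nhds)
  then obtain V where "open V" "q \<in> V" "\<forall>x\<in>V. f x < 0 \<and> x \<in> U"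
    unfolding eventually_nhds by blast
  then have "V \<subseteq> K" using K_U by force
  with \<open>open V\<close> \<open>q \<in> V\<close> have "q \<in> interior K" by (rule interiorI)
  with assms(5) show False ..
qed

lemma sublevel_contains_descent_segment:
  fixes f :: "'a::real_normed_vector \<Rightarrow> real"
  assumes "open U" "q \<in> U" and f: "(f has_derivative D) (at q)" "f q = 0"
    and K_U: "K \<inter> U = {x\<in>U. f x \<le> 0}" and "D w < 0"
  shows "\<exists>e>0. \<forall>t. 0 < t \<and> t < e \<longrightarrow> q + t *\<^sub>R w \<in> K"
proof -
  have "((\<lambda>t. q + t *\<^sub>R w) has_derivative (\<lambda>t. t *\<^sub>R w)) (at 0)"
    by (auto intro!: derivative_eq_intros)
  from diff_chain_at[OF this, of f D] f(1)
  have "((\<lambda>t. f (q + t *\<^sub>R w)) has_derivative (\<lambda>t. t * D w)) (at 0)"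
    by (simp add: o_def linear_scale[OF has_derivative_linear[OF f(1)]])
  then have "((\<lambda>t. f (q + t *\<^sub>R w)) has_real_derivative D w) (at 0)"
    by (simp add: has_field_derivative_def mult.commute[of _ "D w"])
  from DERIV_neg_dec_right[OF this \<open>D w < 0\<close>] f(2)
  obtain d where "d > 0" and neg: "\<And>t. 0 < t \<Longrightarrow> t < d \<Longrightarrow> f (q + t *\<^sub>R w) < 0"
    by auto
  have "((\<lambda>t. q + t *\<^sub>R w) \<longlongrightarrow> q) (at_right 0)"
    by (intro tendsto_eq_intros) auto
  then have "\<forall>\<^sub>F t in at_right 0. q + t *\<^sub>R w \<in> U"
    using assms(1,2) by (rule topological_tendstoD)
  moreover have "\<forall>\<^sub>F t in at_right 0. f (q + t *\<^sub>R w) < 0"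
    using \<open>d > 0\<close> neg by (auto simp: eventually_at_right_field)
  ultimately have "\<forall>\<^sub>F t in at_right 0. q + t *\<^sub>R w \<in> K"
    by eventually_elim (use K_U in force)
  then show ?thesis by (auto simp: eventually_at_right_field)
qed

lemma smooth_boundary_descent_directions:
  fixes K :: "'a::euclidean_space set"
  assumes "smooth_boundary K" "closed K" "q \<in> frontier K"
  obtains g where "g \<noteq> 0" "\<And>w. g \<bullet> w < 0 \<Longrightarrow> \<exists>e>0. \<forall>t. 0 < t \<and> t < e \<longrightarrow> q + t *\<^sub>R w \<in> K"
proof -
  obtain U f where U: "open U" "q \<in> U" and "smooth_on U f"
      and D_nz: "frechet_derivative f (at q) \<noteq> (\<lambda>v. 0)" and K_U: "K \<inter> U = {x\<in>U. f x \<le> 0}"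
    using assms(1,3) unfolding smooth_boundary_def by blast
  define D where "D = frechet_derivative f (at q)"
  have "C_k 1 U f" using \<open>smooth_on U f\<close> smooth_on_def by blast
  then have D: "(f has_derivative D) (at q)"
    using U(2) by (simp add: D_def frechet_derivative_works)
  \<comment> \<open>the gradient of the local defining function\<close>
  define g where "g = adjoint D 1"
  have D_g: "D w = g \<bullet> w" for w
    using adjoint_works[OF has_derivative_linear[OF D], of w 1] by (simp add: g_def inner_commute)
  have "q \<in> K" "q \<notin> interior K"
    using assms(2,3) frontier_subset_closed by (auto simp: frontier_def)
  then have "f q = 0"
    using U D K_U by (intro sublevel_boundary_point_value[of U q f K] has_derivative_continuous)
  show thesis
  proof
    show "g \<noteq> 0" using D_nz by (auto simp: D_def[symmetric] D_g fun_eq_iff)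
  qed (use sublevel_contains_descent_segment[OF U D \<open>f q = 0\<close> K_U] D_g in simp)
qed

text \<open>
  \<open>n\<close> supports K at q and every direction strictly below the supporting hyperplane enters K,
  i.e.\ the normal cone of K at q is the ray spanned by \<open>n\<close>.
\<close>
definition regular_normal :: "'a::euclidean_space set \<Rightarrow> 'a \<Rightarrow> 'a \<Rightarrow> bool" where
  "regular_normal K q n \<longleftrightarrow> norm n = 1 \<and> (\<forall>y\<in>K. y \<bullet> n \<le> q \<bullet> n) \<and>
     (\<forall>w. w \<bullet> n < 0 \<longrightarrow> (\<exists>e>0. \<forall>t. 0 < t \<and> t < e \<longrightarrow> q + t *\<^sub>R w \<in> K))"

lemma regular_normalD:
  assumes "regular_normal K q n"
  shows "n \<bullet> n = 1" "\<And>y. y \<in> K \<Longrightarrow> y \<bullet> n \<le> q \<bullet> n"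
    "\<And>w. w \<bullet> n < 0 \<Longrightarrow> \<exists>e>0. \<forall>t. 0 < t \<and> t < e \<longrightarrow> q + t *\<^sub>R w \<in> K" "norm n = 1"
  using assms by (auto simp: regular_normal_def dot_square_norm)

lemma regular_normal_exists:
  fixes K :: "'a::euclidean_space set"
  assumes "convex_body K" "smooth_boundary K" "q \<in> frontier K"
  obtains n where "regular_normal K q n"
proof -
  have K: "closed K" "convex K" "interior K \<noteq> {}"
    using assms(1) by (auto simp: convex_body_def compact_imp_closed)
  obtain g where "g \<noteq> 0"
    and g: "\<And>w. g \<bullet> w < 0 \<Longrightarrow> \<exists>e>0. \<forall>t. 0 < t \<and> t < e \<longrightarrow> q + t *\<^sub>R w \<in> K"
    using smooth_boundary_descent_directions[OF assms(2) K(1) assms(3)] by blast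
  have "q \<in> K" "q \<notin> rel_interior K"
    using assms(3) K frontier_subset_closed rel_interior_nonempty_interior
    by (auto simp: frontier_def)
  then obtain a where "a \<noteq> 0" and a: "\<And>y. y \<in> K \<Longrightarrow> a \<bullet> q \<le> a \<bullet> y"
    using supporting_hyperplane_relative_frontier[OF K(2)] K(1) by (metis closure_closed)
  define n where "n = - (a /\<^sub>R norm a)"
  have "norm n = 1" using \<open>a \<noteq> 0\<close> by (simp add: n_def)
  have support: "y \<bullet> n \<le> q \<bullet> n" if "y \<in> K" for y
    using a[OF that] \<open>a \<noteq> 0\<close> by (simp add: n_def inner_commute divide_right_mono)
  have "{w. g \<bullet> w < 0} \<subseteq> {w. n \<bullet> w \<le> 0}"
  proof safe
    fix w assume "g \<bullet> w < 0"
    then obtain e where "e > 0" "q + (e/2) *\<^sub>R w \<in> K" using g by force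
    then have "(e/2) * (w \<bullet> n) \<le> 0" using support by (fastforce simp: inner_add_left)
    then show "n \<bullet> w \<le> 0" using \<open>e > 0\<close> by (simp add: mult_le_0_iff inner_commute)
  qed
  then have "{w. n \<bullet> w < 0} \<subseteq> {w. g \<bullet> w < 0}"
    by (rule halfspace_lt_subset_halfspace_le_swap[OF \<open>g \<noteq> 0\<close>])
  then have "g \<bullet> w < 0" if "w \<bullet> n < 0" for w
    using that by (auto simp: inner_commute)
  then have "regular_normal K q n"
    using \<open>norm n = 1\<close> support g by (simp add: regular_normal_def)
  then show thesis ..
qed

lemma tangent_bd_orthogonal_regular_normal:
  assumes "regular_normal K q n" "closed K" "v \<in> tangent_bd K q"
  shows "v \<bullet> n = 0"
proof -
  obtain c e where c: "c 0 = q" "(c has_vector_derivative v) (at 0)" "e > 0"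
    and c_fr: "\<And>t. \<bar>t\<bar> < e \<Longrightarrow> c t \<in> frontier K"
    using assms(3) unfolding tangent_bd_def by blast
  have "((\<lambda>t. c t \<bullet> n) has_real_derivative v \<bullet> n) (at 0)"
    using bounded_linear.has_vector_derivative[OF bounded_linear_inner_left c(2)]
    by (simp add: has_real_derivative_iff_has_vector_derivative)
  moreover have "\<forall>t. \<bar>0 - t\<bar> < e \<longrightarrow> c t \<bullet> n \<le> c 0 \<bullet> n"
    using c(1) c_fr regular_normalD(2)[OF assms(1)] frontier_subset_closed[OF assms(2)] by auto
  ultimately show ?thesis using DERIV_local_max c(3) by blast
qed

lemma regular_normal_two_sided_cone:
  assumes "regular_normal K q n" "q \<in> K" "v \<bullet> n = 0" "d > 0"
  shows "\<exists>e>0. \<forall>t. \<bar>t\<bar> < e \<longrightarrow> q + t *\<^sub>R v - (d * \<bar>t\<bar>) *\<^sub>R n \<in> K"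
proof -
  note n = regular_normalD[OF assms(1)]
  have "(v - d *\<^sub>R n) \<bullet> n < 0" "(- v - d *\<^sub>R n) \<bullet> n < 0"
    using assms(3,4) n(1) by (simp_all add: inner_diff_left)
  then obtain e1 e2 where "e1 > 0" "e2 > 0"
    and e1: "\<And>t. 0 < t \<Longrightarrow> t < e1 \<Longrightarrow> q + t *\<^sub>R (v - d *\<^sub>R n) \<in> K"
    and e2: "\<And>t. 0 < t \<Longrightarrow> t < e2 \<Longrightarrow> q + t *\<^sub>R (- v - d *\<^sub>R n) \<in> K"
    using n(3)[of "v - d *\<^sub>R n"] n(3)[of "- v - d *\<^sub>R n"] by auto
  have "q + t *\<^sub>R v - (d * \<bar>t\<bar>) *\<^sub>R n \<in> K" if "\<bar>t\<bar> < min e1 e2" for t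
  proof (cases t "0::real" rule: linorder_cases)
    case less
    then show ?thesis using e2[of "- t"] that by (simp add: algebra_simps)
  next
    case equal
    then show ?thesis using assms(2) by simp
  next
    case greater
    then show ?thesis using e1[of t] that by (simp add: algebra_simps)
  qed
  then show ?thesis using \<open>e1 > 0\<close> \<open>e2 > 0\<close> by (intro exI[of _ "min e1 e2"]) auto
qed

lemma regular_normal_hyperplane_subset_tangent_bd:
  fixes K :: "'a::euclidean_space set"
  assumes "regular_normal K q n" "closed K" "q \<in> K" "v \<bullet> n = 0"
  shows "v \<in> tangent_bd K q"
proof -
  \<comment> \<open>The curve runs along the top of K above the line \<open>q + t v\<close> in direction \<open>n\<close>; the two-sided
    cone squeezes its height \<open>\<phi> t\<close> between \<open>-d\<bar>t\<bar>\<close> and 0, so \<open>\<phi>' 0 = 0\<close>.\<close>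
  note n = regular_normalD[OF assms(1)]
  define S where "S t = {s. q + t *\<^sub>R v + s *\<^sub>R n \<in> K}" for t
  define \<phi> where "\<phi> t = Sup (S t)" for t
  have S_le: "s \<le> 0" if "s \<in> S t" for s t
    using n(2)[of "q + t *\<^sub>R v + s *\<^sub>R n"] that assms(4) n(1) by (simp add: S_def inner_add_left)
  have "S t = (\<lambda>s. q + t *\<^sub>R v + s *\<^sub>R n) -` K" for t by (auto simp: S_def)
  then have "closed (S t)" for t
    using assms(2) by (auto intro!: continuous_closed_vimage continuous_intros)
  moreover have "bdd_above (S t)" for t using S_le by (auto intro!: bdd_aboveI)
  ultimately have \<phi>: "\<phi> t \<in> S t" "\<And>s. s \<in> S t \<Longrightarrow> s \<le> \<phi> t" if "S t \<noteq> {}" for t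
    using that by (auto simp: \<phi>_def intro: closed_contains_Sup cSup_upper)
  have cone: "\<exists>e>0. \<forall>t. \<bar>t\<bar> < e \<longrightarrow> - (d * \<bar>t\<bar>) \<in> S t" if "d > 0" for d
    using regular_normal_two_sided_cone[OF assms(1,3,4) that] by (simp add: S_def algebra_simps)
  obtain e0 where "e0 > 0" and "\<And>t. \<bar>t\<bar> < e0 \<Longrightarrow> - (1 * \<bar>t\<bar>) \<in> S t"
    using cone[of 1] by auto
  then have e0: "S t \<noteq> {}" if "\<bar>t\<bar> < e0" for t using that by blast
  have "0 \<in> S 0" using assms(3) by (simp add: S_def)
  then have "\<phi> 0 = 0" using \<phi>[of 0] S_le[of "\<phi> 0" 0] by (metis antisym empty_iff)
  moreover have "\<forall>\<^sub>F t in at 0. \<bar>\<phi> t\<bar> \<le> d * \<bar>t\<bar>" if "d > 0" for d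
  proof -
    obtain e where "e > 0" "\<And>t. \<bar>t\<bar> < e \<Longrightarrow> - (d * \<bar>t\<bar>) \<in> S t" using cone \<open>d > 0\<close> by blast
    then have "\<bar>\<phi> t\<bar> \<le> d * \<bar>t\<bar>" if "\<bar>t\<bar> < min e e0" for t
      using that \<phi>[of t] S_le[of "\<phi> t" t] by fastforce
    then show ?thesis
      using \<open>e > 0\<close> \<open>e0 > 0\<close> by (auto simp: eventually_at dist_real_def intro!: exI[of _ "min e e0"])
  qed
  ultimately have \<phi>': "(\<phi> has_real_derivative 0) (at 0)"
    by (rule has_real_derivative_zero_if_sublinear)
  define c where "c t = q + t *\<^sub>R v + \<phi> t *\<^sub>R n" for t
  have "c 0 = q" using \<open>\<phi> 0 = 0\<close> by (simp add: c_def)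
  moreover have "(c has_vector_derivative v) (at 0)"
    unfolding c_def[abs_def] using \<phi>' by (auto intro!: derivative_eq_intros)
  moreover have "c t \<in> frontier K" if "\<bar>t\<bar> < e0" for t
  proof (rule frontier_if_ray_leaves)
    show "c t \<in> K" using \<phi>(1)[OF e0[OF that]] by (simp add: S_def c_def)
    show "c t + s *\<^sub>R n \<notin> K" if "s > 0" for s
      using \<phi>(2)[OF e0[OF \<open>\<bar>t\<bar> < e0\<close>], of "\<phi> t + s"] that
      by (auto simp: S_def c_def algebra_simps)
    show "n \<noteq> 0" using n(1) by auto
  qed (use assms(2) in simp)
  ultimately show ?thesis
    unfolding tangent_bd_def using \<open>e0 > 0\<close> by blast
qed

lemma tangent_bd_regular_normal:
  fixes K :: "'a::euclidean_space set"
  assumes "regular_normal K q n" "closed K" "q \<in> K"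
  shows "tangent_bd K q = {v. v \<bullet> n = 0}"
  using tangent_bd_orthogonal_regular_normal[OF assms(1,2)]
    regular_normal_hyperplane_subset_tangent_bd[OF assms] by blast

lemma outer_normal_eq_regular_normal:
  fixes K :: "'a::euclidean_space set"
  assumes "regular_normal K q n" "closed K" "q \<in> K"
  shows "outer_normal K q = n"
  unfolding outer_normal_def
proof (rule the_equality)
  note n = regular_normalD[OF assms(1)]
  have T: "tangent_bd K q = {v. v \<bullet> n = 0}" by (rule tangent_bd_regular_normal[OF assms])
  have "q + t *\<^sub>R n \<notin> K" if "t > 0" for t
    using n(1) n(2)[of "q + t *\<^sub>R n"] that by (auto simp: inner_add_left)
  then show "norm n = 1 \<and> n \<in> orth_compl (tangent_bd K q) \<and>
      (\<exists>e>0. \<forall>t. 0 < t \<and> t < e \<longrightarrow> q + t *\<^sub>R n \<notin> K)"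
    using n(4) by (auto simp: T orth_compl_def inner_commute intro!: exI[of _ 1])
next
  fix u assume "norm u = 1 \<and> u \<in> orth_compl (tangent_bd K q) \<and>
      (\<exists>e>0. \<forall>t. 0 < t \<and> t < e \<longrightarrow> q + t *\<^sub>R u \<notin> K)"
  then obtain e where "norm u = 1" "u \<in> orth_compl {v. v \<bullet> n = 0}" "e > 0"
    and outside: "\<And>t. 0 < t \<Longrightarrow> t < e \<Longrightarrow> q + t *\<^sub>R u \<notin> K"
    by (auto simp: tangent_bd_regular_normal[OF assms])
  note n = regular_normalD[OF assms(1)]
  have u_n: "u = (u \<bullet> n) *\<^sub>R n" by (rule orth_compl_hyperplane[OF n(1) \<open>u \<in> _\<close>])
  then have "norm u = \<bar>u \<bullet> n\<bar> * norm n" by (metis norm_scaleR)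
  then have "\<bar>u \<bullet> n\<bar> = 1" using \<open>norm u = 1\<close> n(4) by simp
  moreover have "u \<bullet> n \<ge> 0"
  proof (rule ccontr)
    assume "\<not> u \<bullet> n \<ge> 0"
    then obtain e1 where "e1 > 0" and inside: "\<And>t. 0 < t \<Longrightarrow> t < e1 \<Longrightarrow> q + t *\<^sub>R u \<in> K"
      using n(3)[of u] by auto
    obtain t where "0 < t" "t < e" "t < e1"
      using field_lbound_gt_zero[OF \<open>e > 0\<close> \<open>e1 > 0\<close>] by blast
    then show False using inside outside by blast
  qed
  ultimately show "u = n" using u_n by simp
qed

lemma outer_normal_regular:
  fixes K :: "'a::euclidean_space set"
  assumes "convex_body K" "smooth_boundary K" "q \<in> frontier K"
  shows "regular_normal K q (outer_normal K q)" "tangent_bd K q = {v. v \<bullet> outer_normal K q = 0}"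
proof -
  have "closed K" using assms(1) by (simp add: convex_body_def compact_imp_closed)
  then have "q \<in> K" using assms(3) frontier_subset_closed by blast
  obtain n where "regular_normal K q n" using regular_normal_exists[OF assms] .
  moreover have "outer_normal K q = n"
    using outer_normal_eq_regular_normal \<open>regular_normal K q n\<close> \<open>closed K\<close> \<open>q \<in> K\<close> .
  ultimately show "regular_normal K q (outer_normal K q)" "tangent_bd K q = {v. v \<bullet> outer_normal K q = 0}"
    using tangent_bd_regular_normal \<open>closed K\<close> \<open>q \<in> K\<close> by simp_all
qed

lemma finite_lift_Icc:
  assumes "finite B"
  shows "finite (lift B \<inter> {a..b})"
proof (rule finite_subset)
  show "lift B \<inter> {a..b} \<subseteq> (\<lambda>(x, k). x + of_int k) ` (B \<times> {\<lfloor>a\<rfloor>..\<lfloor>b\<rfloor>})"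
  proof
    fix t assume "t \<in> lift B \<inter> {a..b}"
    then have "(frac t, \<lfloor>t\<rfloor>) \<in> B \<times> {\<lfloor>a\<rfloor>..\<lfloor>b\<rfloor>}" by (auto simp: lift_def intro: floor_mono)
    moreover have "t = frac t + of_int \<lfloor>t\<rfloor>" by (simp add: frac_def)
    ultimately show "t \<in> (\<lambda>(x, k). x + of_int k) ` (B \<times> {\<lfloor>a\<rfloor>..\<lfloor>b\<rfloor>})"
      by (intro image_eqI[of _ _ "(frac t, \<lfloor>t\<rfloor>)"]) auto
  qed
  show "finite ((\<lambda>(x, k). x + of_int k) ` (B \<times> {\<lfloor>a\<rfloor>..\<lfloor>b\<rfloor>}))"
    using assms by (intro finite_imageI finite_cartesian_product) auto
qed

lemma lift_isolated:
  assumes "finite B"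
  obtains d where "d > 0" "{t - d<..<t} \<inter> lift B = {}" "{t<..<t + d} \<inter> lift B = {}"
proof -
  obtain \<delta> where "\<delta> > 0" and \<delta>: "\<forall>s\<in>lift B \<inter> {t - 1..t + 1}. s \<noteq> t \<longrightarrow> \<delta> \<le> dist t s"
    using finite_set_avoid[OF finite_lift_Icc[OF assms, of "t - 1" "t + 1"], of t] by blast
  define d where "d = min \<delta> 1"
  have gap: "s \<notin> lift B" if "s \<in> {t - d<..<t} \<union> {t<..<t + d}" for s
  proof
    assume "s \<in> lift B"
    moreover have "s \<in> {t - 1..t + 1}" "s \<noteq> t" using that by (auto simp: d_def)
    ultimately have "\<delta> \<le> \<bar>s - t\<bar>" using \<delta> by (simp add: dist_real_def abs_minus_commute)
    then show False using that by (auto simp: d_def)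
  qed
  have "d > 0" using \<open>\<delta> > 0\<close> by (simp add: d_def)
  then show thesis using gap by (intro that) blast+
qed

lemma lift_gap_around:
  assumes "finite B" "b \<in> lift B" "t \<notin> lift B"
  obtains t0 t1 where "t0 \<in> lift B" "t1 \<in> lift B" "t0 < t" "t < t1" "{t0<..<t1} \<inter> lift B = {}"
proof -
  define L where "L = lift B \<inter> {t - 1..t}"
  define R where "R = lift B \<inter> {t..t + 1}"
  have "finite L" "finite R"
    using finite_lift_Icc[OF assms(1)] by (simp_all only: L_def R_def)
  define x where "x = b + of_int \<lfloor>t - b\<rfloor>"
  have "frac x = frac b" "frac (x + 1) = frac b"
    using frac_add_of_int_right[of x 1] by (simp_all add: x_def)
  then have "x \<in> lift B" "x + 1 \<in> lift B" using assms(2) by (simp_all add: lift_def)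
  moreover have "t - 1 < x" "x \<le> t"
    unfolding x_def using floor_correct[of "t - b"] by linarith+
  ultimately have "x \<in> L" "x + 1 \<in> R" by (auto simp: L_def R_def)
  define t0 where "t0 = Max L"
  define t1 where "t1 = Min R"
  have "t0 \<in> L" "t1 \<in> R"
    unfolding t0_def t1_def using \<open>x \<in> L\<close> \<open>x + 1 \<in> R\<close> \<open>finite L\<close> \<open>finite R\<close>
    by (auto intro: Max_in Min_in)
  have "t0 \<noteq> t" "t1 \<noteq> t" using \<open>t0 \<in> L\<close> \<open>t1 \<in> R\<close> assms(3) by (auto simp: L_def R_def)
  then have "t0 < t" "t < t1" using \<open>t0 \<in> L\<close> \<open>t1 \<in> R\<close> by (auto simp: L_def R_def)
  have "s \<notin> lift B" if "t0 < s" "s < t1" for s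
  proof
    assume "s \<in> lift B"
    then have "s \<in> L \<or> s \<in> R"
      using that \<open>t0 \<in> L\<close> \<open>t1 \<in> R\<close> by (auto simp: L_def R_def)
    then show False
      using that Max_ge[OF \<open>finite L\<close>, of s] Min_le[OF \<open>finite R\<close>, of s] by (auto simp: t0_def t1_def)
  qed
  then have "{t0<..<t1} \<inter> lift B = {}" by auto
  moreover have "t0 \<in> lift B" "t1 \<in> lift B" using \<open>t0 \<in> L\<close> \<open>t1 \<in> R\<close> by (simp_all add: L_def R_def)
  ultimately show thesis using \<open>t0 < t\<close> \<open>t < t1\<close> that by blast
qed

lemma billiard_traj_withD:
  assumes "billiard_traj_with K \<gamma> B"
  shows "\<forall>t. \<gamma> (t + 1) = \<gamma> t" "continuous_on UNIV \<gamma>" "\<gamma> s \<in> K" "finite B" "B \<subseteq> {0..<1}"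
  using assms by (auto simp: billiard_traj_with_def)

lemma billiard_traj_affine_on_gap:
  fixes \<gamma> :: "real \<Rightarrow> 'a::euclidean_space"
  assumes bt: "billiard_traj_with K \<gamma> B" and "a < b" and gap: "{a<..<b} \<inter> lift B = {}"
  obtains c where "\<And>s. s \<in> {a<..<b} \<Longrightarrow> vel \<gamma> s = c" "\<And>s. s \<in> {a..b} \<Longrightarrow> \<gamma> s = \<gamma> a + (s - a) *\<^sub>R c"
proof -
  have \<gamma>': "\<gamma> differentiable (at s)" "(vel \<gamma> has_vector_derivative 0) (at s)" if "s \<in> {a<..<b}" for s
    using bt gap that unfolding billiard_traj_with_def by blast+
  have "\<exists>c. \<forall>s\<in>{a<..<b}. vel \<gamma> s = c"
  proof (rule has_derivative_zero_constant)
    fix s assume "s \<in> {a<..<b}"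
    then show "(vel \<gamma> has_derivative (\<lambda>h. 0)) (at s within {a<..<b})"
      using \<gamma>'(2) by (auto simp: has_vector_derivative_def intro: has_derivative_at_withinI)
  qed simp
  then obtain c where c: "\<And>s. s \<in> {a<..<b} \<Longrightarrow> vel \<gamma> s = c" by blast
  define F where "F s = \<gamma> s - (s - a) *\<^sub>R c" for s
  have "F s = \<gamma> a" if "s \<in> {a..b}" for s
  proof (rule has_derivative_zero_unique_strong_interval[of "{a, b}"])
    show "continuous_on {a..b} F"
      unfolding F_def using billiard_traj_withD(2)[OF bt]
      by (intro continuous_intros) (auto intro: continuous_on_subset)
    fix x assume "x \<in> {a..b} - {a, b}"
    then have "x \<in> {a<..<b}" by auto
    then have "(\<gamma> has_vector_derivative c) (at x)"
      using \<gamma>'(1) c by (simp add: vel_def vector_derivative_works)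
    then have "(F has_vector_derivative c - c) (at x)"
      unfolding F_def[abs_def] by (auto intro!: derivative_eq_intros)
    then show "(F has_derivative (\<lambda>h. 0)) (at x within {a..b})"
      by (auto simp: has_vector_derivative_def intro: has_derivative_at_withinI)
  qed (use that in \<open>simp_all add: F_def\<close>)
  then show thesis using c by (intro that) (auto simp: F_def algebra_simps)
qed

lemma billiard_traj_one_sided_segments:
  fixes \<gamma> :: "real \<Rightarrow> 'a::euclidean_space"
  assumes bt: "billiard_traj_with K \<gamma> B"
    and vp: "(vel \<gamma> \<longlongrightarrow> vp) (at_right t)" and vm: "(vel \<gamma> \<longlongrightarrow> vm) (at_left t)"
  obtains e where "e > 0" "\<And>u. u \<in> {0..e} \<Longrightarrow> \<gamma> (t + u) = \<gamma> t + u *\<^sub>R vp"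
    "\<And>u. u \<in> {0..e} \<Longrightarrow> \<gamma> (t - u) = \<gamma> t - u *\<^sub>R vm"
proof -
  obtain d where "d > 0" and gaps: "{t - d<..<t} \<inter> lift B = {}" "{t<..<t + d} \<inter> lift B = {}"
    using lift_isolated[OF billiard_traj_withD(4)[OF bt]] by blast
  obtain c1 where c1: "\<And>s. s \<in> {t<..<t + d} \<Longrightarrow> vel \<gamma> s = c1"
    and \<gamma>1: "\<And>s. s \<in> {t..t + d} \<Longrightarrow> \<gamma> s = \<gamma> t + (s - t) *\<^sub>R c1"
    using billiard_traj_affine_on_gap[OF bt _ gaps(2)] \<open>d > 0\<close> by auto
  obtain c2 where c2: "\<And>s. s \<in> {t - d<..<t} \<Longrightarrow> vel \<gamma> s = c2"
    and \<gamma>2: "\<And>s. s \<in> {t - d..t} \<Longrightarrow> \<gamma> s = \<gamma> (t - d) + (s - (t - d)) *\<^sub>R c2"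
    using billiard_traj_affine_on_gap[OF bt _ gaps(1)] \<open>d > 0\<close> by auto
  have "\<forall>\<^sub>F s in at_right t. vel \<gamma> s = c1"
    using \<open>d > 0\<close> c1 by (auto simp: eventually_at_right_field intro!: exI[of _ "t + d"])
  then have "vp = c1"
    using tendsto_unique[OF _ vp tendsto_eventually] by simp
  have "\<forall>\<^sub>F s in at_left t. vel \<gamma> s = c2"
    using \<open>d > 0\<close> c2 by (auto simp: eventually_at_left_field intro!: exI[of _ "t - d"])
  then have "vm = c2"
    using tendsto_unique[OF _ vm tendsto_eventually] by simp
  have "\<gamma> t = \<gamma> (t - d) + d *\<^sub>R c2" using \<gamma>2[of t] \<open>d > 0\<close> by simp
  then have "\<gamma> (t - u) = \<gamma> t - u *\<^sub>R vm" if "u \<in> {0..d}" for u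
    using \<gamma>2[of "t - u"] that \<open>vm = c2\<close> by (simp add: algebra_simps)
  moreover have "\<gamma> (t + u) = \<gamma> t + u *\<^sub>R vp" if "u \<in> {0..d}" for u
    using \<gamma>1[of "t + u"] that \<open>vp = c1\<close> by simp
  ultimately show thesis using \<open>d > 0\<close> that by blast
qed

lemma billiard_traj_lift_nonempty:
  fixes \<gamma> :: "real \<Rightarrow> 'a::euclidean_space"
  assumes bt: "billiard_traj_with K \<gamma> B"
  shows "lift B \<noteq> {}"
proof
  assume "lift B = {}"
  then have "{0<..<1} \<inter> lift B = {}" by simp
  then obtain c where c: "\<And>s. s \<in> {0..1} \<Longrightarrow> \<gamma> s = \<gamma> 0 + (s - 0) *\<^sub>R c"
    using billiard_traj_affine_on_gap[OF bt zero_less_one] by metis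
  have "\<gamma> 1 = \<gamma> 0" using spec[OF billiard_traj_withD(1)[OF bt], of 0] by simp
  then have "c = 0" using c[of 1] by simp
  have "\<gamma> s = \<gamma> 0" for s
  proof -
    have "frac s \<in> {0..1}" using frac_lt_1[of s] by simp
    then have "\<gamma> (frac s) = \<gamma> 0" using c[of "frac s"] \<open>c = 0\<close> by simp
    then show ?thesis using periodic_frac[OF billiard_traj_withD(1)[OF bt], of s] by simp
  qed
  moreover obtain s t where "\<gamma> s \<noteq> \<gamma> t" using bt by (auto simp: billiard_traj_with_def)
  ultimately show False by metis
qed

lemma billiard_traj_min_at_bounce:
  fixes \<gamma> :: "real \<Rightarrow> 'a::euclidean_space"
  assumes bt: "billiard_traj_with K \<gamma> B"
  obtains b where "b \<in> B" "\<And>s. a \<bullet> \<gamma> b \<le> a \<bullet> \<gamma> s"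
proof -
  define h where "h s = a \<bullet> \<gamma> s" for s
  have h_per: "\<forall>t. h (t + 1) = h t" using billiard_traj_withD(1)[OF bt] by (simp add: h_def)
  have "continuous_on UNIV h"
    unfolding h_def using billiard_traj_withD(2)[OF bt] by (intro continuous_intros)
  then obtain s0 where s0: "\<And>s. h s0 \<le> h s" using continuous_periodic_attains_min h_per by blast
  have "\<exists>t\<in>lift B. h t \<le> h s0"
  proof (cases "s0 \<in> lift B")
    case False
    obtain b where "b \<in> lift B" using billiard_traj_lift_nonempty[OF bt] by blast
    then obtain t0 t1 where t01: "t0 \<in> lift B" "t1 \<in> lift B" "t0 < s0" "s0 < t1"
      and gap: "{t0<..<t1} \<inter> lift B = {}"
      using lift_gap_around[OF billiard_traj_withD(4)[OF bt] _ False] by blast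
    have "t0 < t1" using t01 by linarith
    obtain c where \<gamma>_lin: "\<And>s. s \<in> {t0..t1} \<Longrightarrow> \<gamma> s = \<gamma> t0 + (s - t0) *\<^sub>R c"
      using billiard_traj_affine_on_gap[OF bt \<open>t0 < t1\<close> gap] by metis
    have h_lin: "h s = h t0 + (s - t0) * (a \<bullet> c)" if "s \<in> {t0..t1}" for s
      using \<gamma>_lin[OF that] by (simp add: h_def inner_add_right)
    have "h t0 \<le> h s0 \<or> h t1 \<le> h s0"
    proof (cases "a \<bullet> c \<ge> 0")
      case True
      then show ?thesis using h_lin[of s0] t01 by simp
    next
      case False
      then have "(t1 - s0) * (a \<bullet> c) \<le> 0" using t01 by (simp add: mult_nonneg_nonpos)
      then show ?thesis using h_lin[of s0] h_lin[of t1] t01 by (simp add: algebra_simps)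
    qed
    then show ?thesis using t01 by blast
  qed auto
  then obtain t where "t \<in> lift B" "h t \<le> h s0" by blast
  then have "frac t \<in> B" "h (frac t) \<le> h s0"
    using periodic_frac[OF h_per, of t] by (simp_all add: lift_def)
  moreover have "h (frac t) \<le> h s" for s using s0[of s] \<open>h (frac t) \<le> h s0\<close> by linarith
  ultimately show thesis using that unfolding h_def by blast
qed

lemma billiard_traj_bounce_reflection:
  fixes K :: "'a::euclidean_space set"
  assumes cb: "convex_body K" and sb: "smooth_boundary K" and bt: "billiard_traj_with K \<gamma> B"
    and "t \<in> B"
  obtains vp vm l where "(vel \<gamma> \<longlongrightarrow> vp) (at_right t)" "(vel \<gamma> \<longlongrightarrow> vm) (at_left t)"
    "l < 0" "vp - vm = l *\<^sub>R outer_normal K (\<gamma> t)"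
proof -
  obtain vp vm where vp: "(vel \<gamma> \<longlongrightarrow> vp) (at_right t)" and vm: "(vel \<gamma> \<longlongrightarrow> vm) (at_left t)"
    and "\<gamma> t \<in> frontier K" "vp + vm \<in> tangent_bd K (\<gamma> t)"
    and "vp - vm \<in> orth_compl (tangent_bd K (\<gamma> t))" "vp - vm \<noteq> 0"
    using bt \<open>t \<in> B\<close> unfolding billiard_traj_with_def by blast
  define \<nu> where "\<nu> = outer_normal K (\<gamma> t)"
  have "regular_normal K (\<gamma> t) \<nu>" and T: "tangent_bd K (\<gamma> t) = {v. v \<bullet> \<nu> = 0}"
    using outer_normal_regular[OF cb sb \<open>\<gamma> t \<in> frontier K\<close>] by (simp_all add: \<nu>_def)
  note \<nu> = regular_normalD[OF this(1)]
  have "vp \<bullet> \<nu> + vm \<bullet> \<nu> = 0"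
    using \<open>vp + vm \<in> tangent_bd K (\<gamma> t)\<close> by (simp add: T inner_add_left)
  define l where "l = (vp - vm) \<bullet> \<nu>"
  have jump: "vp - vm = l *\<^sub>R \<nu>"
    unfolding l_def using orth_compl_hyperplane \<nu>(1) \<open>vp - vm \<in> orth_compl _\<close> T by metis
  \<comment> \<open>leaving the boundary, the trajectory cannot move to the outer side of the supporting hyperplane\<close>
  obtain e where "e > 0" and "\<gamma> (t + e) = \<gamma> t + e *\<^sub>R vp"
    using billiard_traj_one_sided_segments[OF bt vp vm] by (metis atLeastAtMost_iff less_imp_le order_refl)
  then have "e * (vp \<bullet> \<nu>) \<le> 0"
    using \<nu>(2)[OF billiard_traj_withD(3)[OF bt, of "t + e"]] by (simp add: inner_add_left)
  then have "vp \<bullet> \<nu> \<le> 0" using \<open>e > 0\<close> by (simp add: mult_le_0_iff)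
  moreover have "l = 2 * (vp \<bullet> \<nu>)" using \<open>vp \<bullet> \<nu> + vm \<bullet> \<nu> = 0\<close> by (simp add: l_def inner_diff_left)
  moreover have "l \<noteq> 0" using jump \<open>vp - vm \<noteq> 0\<close> by auto
  ultimately have "l < 0" by simp
  then show thesis using that vp vm jump by (simp add: \<nu>_def)
qed

lemma zero_in_convex_hull_bounce_normals:
  fixes K :: "'a::euclidean_space set"
  assumes cb: "convex_body K" and sb: "smooth_boundary K" and bt: "billiard_traj_with K \<gamma> B"
  shows "0 \<in> convex hull ((\<lambda>t. outer_normal K (\<gamma> t)) ` B)"
proof (rule ccontr)
  define N where "N = (\<lambda>t. outer_normal K (\<gamma> t)) ` B"
  assume "0 \<notin> convex hull ((\<lambda>t. outer_normal K (\<gamma> t)) ` B)"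
  moreover have "closed (convex hull N)"
    using billiard_traj_withD(4)[OF bt]
    by (simp add: N_def compact_imp_closed compact_convex_hull finite_imp_compact)
  ultimately obtain a b where "0 < b" and sep: "\<forall>x\<in>convex hull N. b < a \<bullet> x"
    using separating_hyperplane_closed_0[OF convex_convex_hull] unfolding N_def by blast
  obtain b0 where "b0 \<in> B" and min: "\<And>s. a \<bullet> \<gamma> b0 \<le> a \<bullet> \<gamma> s"
    using billiard_traj_min_at_bounce[OF bt] by blast
  obtain vp vm l where vp: "(vel \<gamma> \<longlongrightarrow> vp) (at_right b0)" and vm: "(vel \<gamma> \<longlongrightarrow> vm) (at_left b0)"
    and "l < 0" and jump: "vp - vm = l *\<^sub>R outer_normal K (\<gamma> b0)"
    using billiard_traj_bounce_reflection[OF cb sb bt \<open>b0 \<in> B\<close>] by blast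
  have "outer_normal K (\<gamma> b0) \<in> convex hull N"
    using \<open>b0 \<in> B\<close> by (intro hull_inc) (simp add: N_def)
  then have "a \<bullet> outer_normal K (\<gamma> b0) > 0" using sep \<open>0 < b\<close> by force
  then have "a \<bullet> (vp - vm) < 0" using \<open>l < 0\<close> jump by (simp add: mult_neg_pos)
  moreover obtain e where "e > 0" "\<gamma> (b0 + e) = \<gamma> b0 + e *\<^sub>R vp" "\<gamma> (b0 - e) = \<gamma> b0 - e *\<^sub>R vm"
    using billiard_traj_one_sided_segments[OF bt vp vm] by (metis atLeastAtMost_iff less_imp_le order_refl)
  then have "0 \<le> e * (a \<bullet> vp)" "e * (a \<bullet> vm) \<le> 0"
    using min[of "b0 + e"] min[of "b0 - e"] by (simp_all add: inner_add_right inner_diff_right)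
  then have "a \<bullet> vp \<ge> 0" "a \<bullet> vm \<le> 0"
    using \<open>e > 0\<close> by (simp_all add: zero_le_mult_iff mult_le_0_iff)
  ultimately show False by (simp add: inner_diff_right)
qed

lemma supp_le_bounce_point:
  fixes K :: "'a::euclidean_space set"
  assumes cb: "convex_body K" and sb: "smooth_boundary K" and bt: "billiard_traj_with K \<gamma> B"
    and "t \<in> B"
  shows "supp K (outer_normal K (\<gamma> t)) \<le> supp (range \<gamma>) (outer_normal K (\<gamma> t))"
proof -
  define \<nu> where "\<nu> = outer_normal K (\<gamma> t)"
  have "\<gamma> t \<in> frontier K" using bt \<open>t \<in> B\<close> unfolding billiard_traj_with_def by blast
  then have support: "y \<bullet> \<nu> \<le> \<gamma> t \<bullet> \<nu>" if "y \<in> K" for y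
    using regular_normalD(2)[OF outer_normal_regular(1)[OF cb sb]] that by (simp add: \<nu>_def)
  have "range \<gamma> \<subseteq> K" using billiard_traj_withD(3)[OF bt] by blast
  moreover have "bounded K" using cb by (simp add: convex_body_def compact_imp_bounded)
  ultimately have "bounded ((\<lambda>s. s \<bullet> \<nu>) ` range \<gamma>)"
    using bounded_linear_image[OF bounded_subset bounded_linear_inner_left] by blast
  then have "\<gamma> t \<bullet> \<nu> \<le> supp (range \<gamma>) \<nu>"
    unfolding supp_def by (intro cSup_upper bounded_imp_bdd_above) auto
  moreover have "supp K \<nu> \<le> \<gamma> t \<bullet> \<nu>"
    unfolding supp_def using support \<open>range \<gamma> \<subseteq> K\<close> by (intro cSup_least) auto
  ultimately show ?thesis by (simp add: \<nu>_def)
qed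

lemma billiard_traj_piecewise_linear_closed:
  fixes \<gamma> :: "real \<Rightarrow> 'a::euclidean_space"
  assumes bt: "billiard_traj_with K \<gamma> B"
  shows "piecewise_linear_closed \<gamma>"
  unfolding piecewise_linear_closed_def
proof (intro conjI exI[of _ B] allI impI)
  fix a b assume "a < b \<and> {a<..<b} \<inter> lift B = {}"
  then obtain c where "\<And>s. s \<in> {a..b} \<Longrightarrow> \<gamma> s = \<gamma> a + (s - a) *\<^sub>R c"
    using billiard_traj_affine_on_gap[OF bt] by metis
  then have "\<forall>s\<in>{a..b}. \<gamma> s = (\<gamma> a - a *\<^sub>R c) + s *\<^sub>R c" by (simp add: algebra_simps)
  then show "\<exists>u v. \<forall>s\<in>{a..b}. \<gamma> s = u + s *\<^sub>R v" by blast
qed (use billiard_traj_withD[OF bt] in auto)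

lemma billiard_traj_not_translatable_into_interior:
  fixes K :: "'a::euclidean_space set"
  assumes cb: "convex_body K" and sb: "smooth_boundary K" and bt: "billiard_traj_with K \<gamma> B"
  shows "\<not> (\<lambda>p. p + x) ` range \<gamma> \<subseteq> interior K"
proof
  assume inside: "(\<lambda>p. p + x) ` range \<gamma> \<subseteq> interior K"
  define N where "N = (\<lambda>t. outer_normal K (\<gamma> t)) ` B"
  have "x \<bullet> \<nu> < 0" if "\<nu> \<in> N" for \<nu>
  proof -
    obtain t where "t \<in> B" and \<nu>_def: "\<nu> = outer_normal K (\<gamma> t)" using \<open>\<nu> \<in> N\<close> by (auto simp: N_def)
    then have "\<gamma> t \<in> frontier K" using bt unfolding billiard_traj_with_def by blast
    note \<nu> = regular_normalD[OF outer_normal_regular(1)[OF cb sb this], folded \<nu>_def]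
    have "\<gamma> t + x \<in> interior K" using inside by blast
    then obtain r where "r > 0" "ball (\<gamma> t + x) r \<subseteq> K" by (auto simp: mem_interior)
    moreover have "\<gamma> t + x + (r/2) *\<^sub>R \<nu> \<in> ball (\<gamma> t + x) r"
      using \<open>r > 0\<close> \<nu>(4) by (simp add: dist_norm)
    ultimately have "(\<gamma> t + x + (r/2) *\<^sub>R \<nu>) \<bullet> \<nu> \<le> \<gamma> t \<bullet> \<nu>" using \<nu>(2) by blast
    then have "x \<bullet> \<nu> + r/2 \<le> 0" using \<nu>(1) by (simp add: inner_add_left)
    then show ?thesis using \<open>r > 0\<close> by simp
  qed
  then have "convex hull N \<subseteq> {y. x \<bullet> y < 0}"
    by (intro hull_minimal) (auto simp: convex_halfspace_lt)
  moreover have "0 \<in> convex hull N"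
    unfolding N_def by (rule zero_in_convex_hull_bounce_normals[OF cb sb bt])
  ultimately show False by auto
qed

theorem lemma6p2:
  fixes K :: "'a::euclidean_space set" and \<gamma> :: "real \<Rightarrow> 'a" and B :: "real set"
  assumes "convex_body K" and "smooth_boundary K" and "billiard_traj_with K \<gamma> B"
  shows "(0::'a) \<in> convex hull ((\<lambda>t. outer_normal K (\<gamma> t)) ` B) \<and>
         (\<forall>\<nu>\<in>(\<lambda>t. outer_normal K (\<gamma> t)) ` B. supp K \<nu> \<le> supp (\<gamma> ` UNIV) \<nu>) \<and>
         billiard_trajs K \<subseteq> PPlus K"
proof (intro conjI ballI subsetI)
  show "0 \<in> convex hull ((\<lambda>t. outer_normal K (\<gamma> t)) ` B)"
    by (rule zero_in_convex_hull_bounce_normals[OF assms])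
  show "supp K \<nu> \<le> supp (\<gamma> ` UNIV) \<nu>" if "\<nu> \<in> (\<lambda>t. outer_normal K (\<gamma> t)) ` B" for \<nu>
    using that supp_le_bounce_point[OF assms] by blast
  fix \<eta> assume "\<eta> \<in> billiard_trajs K"
  then obtain C where "billiard_traj_with K \<eta> C" by (auto simp: billiard_trajs_def)
  then show "\<eta> \<in> PPlus K"
    using billiard_traj_piecewise_linear_closed billiard_traj_not_translatable_into_interior[OF assms(1,2)]
    by (auto simp: PPlus_def)
qed

end
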